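(* Consider a 3-S 3-D MUN-D over $\mathbb{F}_{2^m}$ (as in the context) with nonzero min-cut between every $S_i$ and $T_j$, let $k\mid 2^m-1$ and $\alpha\in\mathbb{F}_{2^m}$ of multiplicative order $k$. For each $i\in\{1,2,3\}$ and each $q\in\{1,\dots,k-1\}$, $b_i(q)$ is a constant if and only if $b_i(0)$ is a constant.
   Context: A 3-S 3-D MUN-D: finite directed acyclic graph with unit-delay links, sources $S_1,S_2,S_3$ (one process each), destinations $T_1,T_2,T_3$ ($T_i$ demands $S_i$'s process), min-cut between $S_i$ and $T_i$ equal to $1$, linear network coding with local encoding coefficient vector $\underline{\varepsilon}$ (indeterminates); $M_{ij}(\underline{\varepsilon},D)$ is the scalar transfer polynomial from $S_i$ to $T_j$ (common delay removed) and $M_{ij}(\underline{\varepsilon},x)$ its value at $D=x$. Writing $M_{ij}$ for $M_{ij}(\underline{\varepsilon},\alpha^q)$: $b_1(q)=\frac{M_{21}M_{13}}{M_{11}M_{23}}$, $b_2(q)=\frac{M_{22}M_{13}}{M_{12}M_{23}}$, $b_3(q)=\frac{M_{33}M_{12}}{M_{13}M_{32}}$. "Constant" means independent of $\underline{\varepsilon}$. *)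

theory Defs
  imports Main "HOL-Library.Poly_Mapping"
begin

text \<open>A network is given by a finite type of edges (links) 'e together with tail and head
  maps into a node type 'v (parallel edges allowed).\<close>

definition is_net_path :: "('e \<Rightarrow> 'v) \<Rightarrow> ('e \<Rightarrow> 'v) \<Rightarrow> 'e list \<Rightarrow> bool" where
  "is_net_path tail head p \<longleftrightarrow> p \<noteq> [] \<and> (\<forall>k. Suc k < length p \<longrightarrow> head (p ! k) = tail (p ! Suc k))"

definition acyclic_net :: "('e \<Rightarrow> 'v) \<Rightarrow> ('e \<Rightarrow> 'v) \<Rightarrow> bool" where
  "acyclic_net tail head \<longleftrightarrow> (\<forall>p. is_net_path tail head p \<longrightarrow> head (last p) \<noteq> tail (List.hd p))"

definition net_paths :: "('e \<Rightarrow> 'v) \<Rightarrow> ('e \<Rightarrow> 'v) \<Rightarrow> 'v \<Rightarrow> 'v \<Rightarrow> 'e list set" where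
  "net_paths tail head s t = {p. is_net_path tail head p \<and> tail (List.hd p) = s \<and> head (last p) = t}"

definition min_cut :: "('e::finite \<Rightarrow> 'v) \<Rightarrow> ('e \<Rightarrow> 'v) \<Rightarrow> 'v \<Rightarrow> 'v \<Rightarrow> nat" where
  "min_cut tail head s t =
     (LEAST n. \<exists>C::'e set. card C = n \<and> (\<forall>p \<in> net_paths tail head s t. set p \<inter> C \<noteq> {}))"

text \<open>Local encoding coefficients (indeterminates): a coefficient at the source for each
  edge leaving it, one for each pair of adjacent edges, one at the sink for each edge
  entering it.\<close>
datatype 'e lvar = Src 'e | Loc 'e 'e | Snk 'e

fun path_vars :: "'e list \<Rightarrow> 'e lvar list" where
  "path_vars [] = []"
| "path_vars [e] = [Snk e]"
| "path_vars (e # f # p) = Loc e f # path_vars (f # p)"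

definition path_expo :: "'e list \<Rightarrow> ('e lvar \<Rightarrow>\<^sub>0 nat)" where
  "path_expo p = sum_list (map (\<lambda>v. Poly_Mapping.single v 1) (Src (List.hd p) # path_vars p))"

type_synonym ('e, 'a) epoly = "('e lvar \<Rightarrow>\<^sub>0 nat) \<Rightarrow>\<^sub>0 'a"

text \<open>The common delay of the transfer polynomial: every link has unit delay, a path of
  length n contributes the term (monomial) * D^n, distinct paths give distinct monomials,
  so the largest power of D dividing the transfer polynomial is D^(minimal path length).\<close>
definition common_delay :: "('e \<Rightarrow> 'v) \<Rightarrow> ('e \<Rightarrow> 'v) \<Rightarrow> 'v \<Rightarrow> 'v \<Rightarrow> nat" where
  "common_delay tail head s t = Min (length ` net_paths tail head s t)"

text \<open>M(eps, x): transfer polynomial from s to t with the common delay removed,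
  with D evaluated at x.\<close>
definition transfer :: "('e \<Rightarrow> 'v) \<Rightarrow> ('e \<Rightarrow> 'v) \<Rightarrow> 'v \<Rightarrow> 'v \<Rightarrow> 'a::comm_ring_1 \<Rightarrow> ('e, 'a) epoly" where
  "transfer tail head s t x =
     (\<Sum>p \<in> net_paths tail head s t.
        Poly_Mapping.single (path_expo p) (x ^ (length p - common_delay tail head s t)))"

text \<open>The ratios b_i(q) = num/den, with M_ij = transfer from S_i to T_j at D = x.\<close>
definition b_num :: "('e \<Rightarrow> 'v) \<Rightarrow> ('e \<Rightarrow> 'v) \<Rightarrow> (nat \<Rightarrow> 'v) \<Rightarrow> (nat \<Rightarrow> 'v) \<Rightarrow> nat \<Rightarrow> 'a::comm_ring_1 \<Rightarrow> ('e, 'a) epoly" where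
  "b_num tail head S T i x = (let M = (\<lambda>a b. transfer tail head (S a) (T b) x) in
     if i = 1 then M 2 1 * M 1 3 else if i = 2 then M 2 2 * M 1 3 else M 3 3 * M 1 2)"

definition b_den :: "('e \<Rightarrow> 'v) \<Rightarrow> ('e \<Rightarrow> 'v) \<Rightarrow> (nat \<Rightarrow> 'v) \<Rightarrow> (nat \<Rightarrow> 'v) \<Rightarrow> nat \<Rightarrow> 'a::comm_ring_1 \<Rightarrow> ('e, 'a) epoly" where
  "b_den tail head S T i x = (let M = (\<lambda>a b. transfer tail head (S a) (T b) x) in
     if i = 1 then M 1 1 * M 2 3 else if i = 2 then M 1 2 * M 2 3 else M 1 3 * M 3 2)"

text \<open>A ratio num/den of polynomials (den nonzero) is constant, i.e. independent of the
  indeterminates, iff num = c * den for some constant c.\<close>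
definition const_ratio :: "('e, 'a::comm_ring_1) epoly \<Rightarrow> ('e, 'a) epoly \<Rightarrow> bool" where
  "const_ratio num den \<longleftrightarrow> (\<exists>c. num = Poly_Mapping.single 0 c * den)"

end

theory Submission
  imports Defs
begin

text \<open>Substitute \<open>y \<cdot> \<epsilon>\<close> for every local coefficient \<open>\<epsilon>\<close> other than the source
  coefficients. A path of length \<open>n\<close> carries exactly \<open>n\<close> such coefficients, so its term
  \<open>\<epsilon>\<^sup>p x\<^sup>n\<^sup>-\<^sup>d\<close> becomes \<open>y\<^sup>d \<epsilon>\<^sup>p (x y)\<^sup>n\<^sup>-\<^sup>d\<close>: the substitution sends \<open>M(\<epsilon>, x)\<close> to
  \<open>y\<^sup>d M(\<epsilon>, x y)\<close>, where \<open>d\<close> is the common delay. It is a ring homomorphism fixing the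
  constants, so for \<open>y \<noteq> 0\<close> constancy of \<open>b\<^sub>i\<close> at \<open>x\<close> carries over to \<open>x y\<close> (the powers of \<open>y\<close>
  are nonzero constant factors). Taking \<open>x = 1, y = \<alpha>\<^sup>q\<close> and \<open>x = \<alpha>\<^sup>q, y = \<alpha>\<^sup>-\<^sup>q\<close> gives the
  theorem.\<close>

text \<open>For \<open>w\<close> additive on monomials this is the substitution of \<open>y\<^bsup>w(\<epsilon>)\<^esup> \<epsilon>\<close> for each
  indeterminate \<open>\<epsilon>\<close>.\<close>

definition weight_scale :: "('m \<Rightarrow> nat) \<Rightarrow> 'a::comm_semiring_1 \<Rightarrow> ('m \<Rightarrow>\<^sub>0 'a) \<Rightarrow> ('m \<Rightarrow>\<^sub>0 'a)" where
  "weight_scale w y P = Poly_Mapping.mapp (\<lambda>\<mu> a. y ^ w \<mu> * a) P"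

lemma lookup_weight_scale:
  "Poly_Mapping.lookup (weight_scale w y P) \<mu> = y ^ w \<mu> * Poly_Mapping.lookup P \<mu>"
  unfolding weight_scale_def lookup_mapp by (auto simp: in_keys_iff when_def)

lemma weight_scale_add: "weight_scale w y (P + Q) = weight_scale w y P + weight_scale w y Q"
  by (rule poly_mapping_eqI) (simp add: lookup_weight_scale lookup_add algebra_simps)

lemma weight_scale_zero [simp]: "weight_scale w y 0 = 0"
  by (rule poly_mapping_eqI) (simp add: lookup_weight_scale)

lemma weight_scale_sum: "weight_scale w y (sum f A) = (\<Sum>a\<in>A. weight_scale w y (f a))"
  by (induction A rule: infinite_finite_induct) (simp_all add: weight_scale_add)

lemma weight_scale_single:
  "weight_scale w y (Poly_Mapping.single \<mu> a) = Poly_Mapping.single \<mu> (y ^ w \<mu> * a)"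
  by (rule poly_mapping_eqI) (auto simp: lookup_weight_scale lookup_single when_def)

lemma weight_scale_mult:
  fixes P Q :: "'m::comm_monoid_add \<Rightarrow>\<^sub>0 'a::comm_semiring_1"
  assumes additive: "\<And>\<mu> \<nu>. w (\<mu> + \<nu>) = w \<mu> + w \<nu>"
  shows "weight_scale w y (P * Q) = weight_scale w y P * weight_scale w y Q"
proof (rule poly_mapping_eqI)
  fix \<kappa>
  let ?P = "Poly_Mapping.lookup P" and ?Q = "Poly_Mapping.lookup Q"
  let ?yP = "Poly_Mapping.lookup (weight_scale w y P)"
    and ?yQ = "Poly_Mapping.lookup (weight_scale w y Q)"
  have lookup_product: "Poly_Mapping.lookup (F * G) \<kappa> =
      (\<Sum>(\<mu>, \<nu>). Poly_Mapping.lookup F \<mu> * Poly_Mapping.lookup G \<nu> when \<kappa> = \<mu> + \<nu>)"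
    for F G :: "'m \<Rightarrow>\<^sub>0 'a"
    unfolding lookup_mult prod_fun_def[symmetric] by (rule prod_fun_unfold_prod) auto
  have finite_support: "finite {\<mu>\<nu>. (\<lambda>(\<mu>, \<nu>). ?P \<mu> * ?Q \<nu> when \<kappa> = \<mu> + \<nu>) \<mu>\<nu> \<noteq> 0}"
    by (rule finite_subset[of _ "{\<mu>. ?P \<mu> \<noteq> 0} \<times> {\<nu>. ?Q \<nu> \<noteq> 0}"]) auto
  have "Poly_Mapping.lookup (weight_scale w y (P * Q)) \<kappa>
      = y ^ w \<kappa> * (\<Sum>(\<mu>, \<nu>). ?P \<mu> * ?Q \<nu> when \<kappa> = \<mu> + \<nu>)"
    by (simp add: lookup_weight_scale lookup_product)
  also have "\<dots> = (\<Sum>(\<mu>, \<nu>). y ^ w \<kappa> * (?P \<mu> * ?Q \<nu> when \<kappa> = \<mu> + \<nu>))"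
    by (subst Sum_any_right_distrib[OF finite_support]) (simp add: case_prod_unfold)
  also have "\<dots> = (\<Sum>(\<mu>, \<nu>). ?yP \<mu> * ?yQ \<nu> when \<kappa> = \<mu> + \<nu>)"
    by (intro Sum_any.cong) (auto simp: lookup_weight_scale additive power_add when_def mult_ac)
  also have "\<dots> = Poly_Mapping.lookup (weight_scale w y P * weight_scale w y Q) \<kappa>"
    by (simp add: lookup_product)
  finally show "Poly_Mapping.lookup (weight_scale w y (P * Q)) \<kappa> =
      Poly_Mapping.lookup (weight_scale w y P * weight_scale w y Q) \<kappa>" .
qed

lemma const_ratio_weight_scale:
  fixes N D :: "('e, 'a::comm_ring_1) epoly"
  assumes additive: "\<And>\<mu> \<nu>. w (\<mu> + \<nu>) = w \<mu> + w \<nu>"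
    and "const_ratio N D"
  shows "const_ratio (weight_scale w y N) (weight_scale w y D)"
proof -
  obtain c where "N = Poly_Mapping.single 0 c * D"
    using \<open>const_ratio N D\<close> unfolding const_ratio_def by blast
  moreover have "w 0 = 0"
    using additive[of 0 0] by simp
  ultimately have "weight_scale w y N = Poly_Mapping.single 0 c * weight_scale w y D"
    by (simp add: weight_scale_mult[OF additive] weight_scale_single)
  then show ?thesis
    unfolding const_ratio_def by blast
qed

lemma const_ratio_cancel_constants:
  fixes N D :: "('e, 'a::field) epoly"
  assumes "a \<noteq> 0"
    and "const_ratio (Poly_Mapping.single 0 a * N) (Poly_Mapping.single 0 b * D)"
  shows "const_ratio N D"
proof -
  obtain c where c: "Poly_Mapping.single 0 a * N = Poly_Mapping.single 0 c * (Poly_Mapping.single 0 b * D)"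
    using assms(2) unfolding const_ratio_def by blast
  have "N = Poly_Mapping.single 0 (inverse a) * (Poly_Mapping.single 0 a * N)"
    using \<open>a \<noteq> 0\<close> by (simp add: mult.assoc[symmetric] mult_single)
  also have "\<dots> = Poly_Mapping.single 0 (inverse a * c * b) * D"
    by (simp add: c mult.assoc[symmetric] mult_single)
  finally show ?thesis
    unfolding const_ratio_def by blast
qed

definition delay_weight :: "('e lvar \<Rightarrow>\<^sub>0 nat) \<Rightarrow> nat" where
  "delay_weight \<mu> = (\<Sum>v. Poly_Mapping.lookup \<mu> v when v \<notin> range Src)"

lemma delay_weight_add: "delay_weight (\<mu> + \<nu>) = delay_weight \<mu> + delay_weight \<nu>"
proof -
  have finite: "finite {v. (Poly_Mapping.lookup \<kappa> v when v \<notin> range Src) \<noteq> 0}" for \<kappa> :: "'e lvar \<Rightarrow>\<^sub>0 nat"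
    by (rule finite_subset[OF _ finite_lookup[of \<kappa>]]) (auto simp: when_def)
  show ?thesis
    unfolding delay_weight_def lookup_add when_add_distrib by (rule Sum_any.distrib[OF finite finite])
qed

lemma delay_weight_single: "delay_weight (Poly_Mapping.single v n) = (n when v \<notin> range Src)"
  unfolding delay_weight_def lookup_single by (subst when_commute) (rule Sum_any_when_equal')

lemma length_path_vars: "length (path_vars p) = length p"
  by (induction p rule: path_vars.induct) auto

lemma Src_notin_path_vars: "Src e \<notin> set (path_vars p)"
  by (induction p rule: path_vars.induct) auto

lemma delay_weight_path_expo: "delay_weight (path_expo p) = length p"
proof -
  have delay_weight_sum_list: "delay_weight (sum_list xs) = (\<Sum>\<mu>\<leftarrow>xs. delay_weight \<mu>)" for xs
    by (induction xs) (simp_all add: delay_weight_add, simp add: delay_weight_def)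
  have "delay_weight (path_expo p) = (\<Sum>v\<leftarrow>path_vars p. 1 when v \<notin> range Src)"
    unfolding path_expo_def delay_weight_sum_list by (simp add: o_def delay_weight_single)
  also have "\<dots> = (\<Sum>v\<leftarrow>path_vars p. 1)"
    by (rule arg_cong[where f = sum_list], rule map_cong) (auto simp: when_def Src_notin_path_vars)
  finally show ?thesis
    by (simp add: sum_list_triv length_path_vars)
qed

lemma weight_scale_transfer:
  fixes x y :: "'a::comm_ring_1"
  shows "weight_scale delay_weight y (transfer tail head s t x) =
    Poly_Mapping.single 0 (y ^ common_delay tail head s t) * transfer tail head s t (x * y)"
proof (cases "finite (net_paths tail head s t)")
  case False
  then show ?thesis
    by (simp add: transfer_def weight_scale_sum)
next
  case True
  let ?d = "common_delay tail head s t"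
  have "y ^ length p * x ^ (length p - ?d) = y ^ ?d * (x * y) ^ (length p - ?d)"
    if "p \<in> net_paths tail head s t" for p
  proof -
    have "?d \<le> length p"
      unfolding common_delay_def using True that by (intro Min_le) auto
    then have "y ^ length p = y ^ ?d * y ^ (length p - ?d)"
      by (simp add: power_add[symmetric])
    then show ?thesis
      by (simp add: power_mult_distrib mult_ac)
  qed
  then show ?thesis
    unfolding transfer_def weight_scale_sum sum_distrib_left
    by (intro sum.cong refl) (simp add: weight_scale_single delay_weight_path_expo mult_single)
qed

lemma const_ratio_transfer_products_shift:
  fixes x y :: "'a::field"
  assumes "y \<noteq> 0"
    and "const_ratio (transfer tail head s\<^sub>1 t\<^sub>1 x * transfer tail head s\<^sub>2 t\<^sub>2 x)
                     (transfer tail head s\<^sub>3 t\<^sub>3 x * transfer tail head s\<^sub>4 t\<^sub>4 x)"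
  shows "const_ratio (transfer tail head s\<^sub>1 t\<^sub>1 (x * y) * transfer tail head s\<^sub>2 t\<^sub>2 (x * y))
                     (transfer tail head s\<^sub>3 t\<^sub>3 (x * y) * transfer tail head s\<^sub>4 t\<^sub>4 (x * y))"
proof (rule const_ratio_cancel_constants)
  show "y ^ (common_delay tail head s\<^sub>1 t\<^sub>1 + common_delay tail head s\<^sub>2 t\<^sub>2) \<noteq> 0"
    using \<open>y \<noteq> 0\<close> by simp
  show "const_ratio
    (Poly_Mapping.single 0 (y ^ (common_delay tail head s\<^sub>1 t\<^sub>1 + common_delay tail head s\<^sub>2 t\<^sub>2)) *
      (transfer tail head s\<^sub>1 t\<^sub>1 (x * y) * transfer tail head s\<^sub>2 t\<^sub>2 (x * y)))
    (Poly_Mapping.single 0 (y ^ (common_delay tail head s\<^sub>3 t\<^sub>3 + common_delay tail head s\<^sub>4 t\<^sub>4)) *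
      (transfer tail head s\<^sub>3 t\<^sub>3 (x * y) * transfer tail head s\<^sub>4 t\<^sub>4 (x * y)))"
    using const_ratio_weight_scale[OF delay_weight_add assms(2), of y]
    by (simp add: weight_scale_mult[OF delay_weight_add] weight_scale_transfer
        power_add mult_single mult_ac)
qed

lemma const_ratio_b_shift:
  fixes x y :: "'a::field"
  assumes "y \<noteq> 0"
    and "const_ratio (b_num tail head S T i x) (b_den tail head S T i x)"
  shows "const_ratio (b_num tail head S T i (x * y)) (b_den tail head S T i (x * y))"
  using assms const_ratio_transfer_products_shift[OF \<open>y \<noteq> 0\<close>]
  unfolding b_num_def b_den_def Let_def by (simp split: if_splits)

theorem proposition1:
  fixes tail head :: "'e::finite \<Rightarrow> 'v"
    and S T :: "nat \<Rightarrow> 'v"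
    and \<alpha> :: "'a::{field,finite}"
    and m k :: nat
  assumes field_size: "card (UNIV :: 'a set) = 2 ^ m"
    and dag: "acyclic_net tail head"
    and cut_ii: "\<forall>i \<in> {1,2,3}. min_cut tail head (S i) (T i) = 1"
    and cut_ij: "\<forall>i \<in> {1,2,3}. \<forall>j \<in> {1,2,3}. min_cut tail head (S i) (T j) \<noteq> 0"
    and k_dvd: "k dvd 2 ^ m - 1"
    and ord: "0 < k" "\<alpha> ^ k = 1" "\<forall>j. 0 < j \<and> j < k \<longrightarrow> \<alpha> ^ j \<noteq> 1"
  shows "\<forall>i \<in> {1,2,3}. \<forall>q \<in> {1..k-1}.
           const_ratio (b_num tail head S T i (\<alpha> ^ q)) (b_den tail head S T i (\<alpha> ^ q))
           \<longleftrightarrow> const_ratio (b_num tail head S T i (\<alpha> ^ 0)) (b_den tail head S T i (\<alpha> ^ 0))"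
proof (intro ballI iffI)
  fix i q
  have "\<alpha> \<noteq> 0"
    using ord(1,2) by (metis power_0_left less_not_refl zero_neq_one)
  then have "\<alpha> ^ q \<noteq> 0" "inverse (\<alpha> ^ q) \<noteq> 0"
    by simp_all
  show "const_ratio (b_num tail head S T i (\<alpha> ^ 0)) (b_den tail head S T i (\<alpha> ^ 0))"
    if "const_ratio (b_num tail head S T i (\<alpha> ^ q)) (b_den tail head S T i (\<alpha> ^ q))"
    using const_ratio_b_shift[OF \<open>inverse (\<alpha> ^ q) \<noteq> 0\<close> that] \<open>\<alpha> ^ q \<noteq> 0\<close> by simp
  show "const_ratio (b_num tail head S T i (\<alpha> ^ q)) (b_den tail head S T i (\<alpha> ^ q))"
    if "const_ratio (b_num tail head S T i (\<alpha> ^ 0)) (b_den tail head S T i (\<alpha> ^ 0))"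
    using const_ratio_b_shift[OF \<open>\<alpha> ^ q \<noteq> 0\<close> that] by simp
qed

end
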